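(* For any $\vartheta,\varphi\in[0,2\pi]$ and $p,q\in[0,1]$, $$\sqrt{1-pq\cos(\vartheta+\varphi)}\le\sqrt{1-p\cos\vartheta}+\sqrt{1-q\cos\varphi},$$ $$\sqrt{1-pq\cos(\vartheta-\varphi)}\ge\sqrt{1-p\cos\vartheta}-\sqrt{1-q\cos\varphi}.$$ *)

theory Defs
  imports Complex_Main
begin

end

theory Submission
  imports Defs
begin

(* Put z = p e^(i theta) and w = q e^(i phi), points of the closed unit disk, and
   a = sqrt (1 - Re z), b = sqrt (1 - Re w).  Then
     1 - Re (z w) = a^2 + b^2 - a^2 b^2 + Im z Im w,
   and (Im z)^2 <= 1 - (Re z)^2 = a^2 (2 - a^2), so
     |Im z Im w| <= a b sqrt ((2 - a^2) (2 - b^2)) <= a b (2 - a b),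
   the last step because (2 - a b)^2 - (2 - a^2) (2 - b^2) = 2 (a - b)^2.
   Hence (a - b)^2 <= 1 - Re (z w) <= (a + b)^2, which gives the first inequality;
   the second is the lower bound applied to z and the conjugate of w. *)

lemma abs_mult_le_of_power2_bounds:
  fixes a b u v :: real
  assumes "a \<ge> 0" "b \<ge> 0" "u\<^sup>2 \<le> a\<^sup>2 * (2 - a\<^sup>2)" "v\<^sup>2 \<le> b\<^sup>2 * (2 - b\<^sup>2)"
  shows "\<bar>u * v\<bar> \<le> a * b * (2 - a * b)"
proof -
  have le_2: "x\<^sup>2 \<le> 2" if "y\<^sup>2 \<le> x\<^sup>2 * (2 - x\<^sup>2)" for x y :: real
  proof (rule ccontr)
    assume "\<not> x\<^sup>2 \<le> 2"
    then have "x\<^sup>2 * (2 - x\<^sup>2) < 0"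
      by (intro mult_pos_neg) auto
    with that show False
      using zero_le_power2[of y] by linarith
  qed
  have a2: "a\<^sup>2 \<le> 2" and b2: "b\<^sup>2 \<le> 2"
    using le_2 assms(3,4) by blast+
  have "(u * v)\<^sup>2 = u\<^sup>2 * v\<^sup>2"
    by (simp add: power_mult_distrib)
  also have "\<dots> \<le> (a\<^sup>2 * (2 - a\<^sup>2)) * (b\<^sup>2 * (2 - b\<^sup>2))"
    using assms a2 by (intro mult_mono) auto
  also have "\<dots> = (a * b)\<^sup>2 * ((2 - a * b)\<^sup>2 - 2 * (a - b)\<^sup>2)"
    by algebra
  also have "\<dots> \<le> (a * b * (2 - a * b))\<^sup>2"
    by (simp add: power_mult_distrib mult_left_mono)
  finally have "\<bar>u * v\<bar> \<le> \<bar>a * b * (2 - a * b)\<bar>"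
    using abs_le_square_iff by blast
  moreover have "a * b \<le> 2"
    using a2 b2 zero_le_power2[of "a - b"] unfolding power2_diff by linarith
  ultimately show ?thesis
    using assms(1,2) by simp
qed

lemma Im_power2_le_in_unit_disk:
  assumes "cmod z \<le> 1"
  shows "(Im z)\<^sup>2 \<le> (sqrt (1 - Re z))\<^sup>2 * (2 - (sqrt (1 - Re z))\<^sup>2)"
proof -
  have "(Re z)\<^sup>2 + (Im z)\<^sup>2 \<le> 1"
    using assms by (simp add: cmod_def)
  moreover have "Re z \<le> 1"
    using assms abs_Re_le_cmod[of z] by linarith
  ultimately show ?thesis
    by (simp add: algebra_simps power2_eq_square)
qed

lemma one_minus_Re_mult_bounds:
  assumes "cmod z \<le> 1" "cmod w \<le> 1"
  defines "a \<equiv> sqrt (1 - Re z)" and "b \<equiv> sqrt (1 - Re w)"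
  shows "(a - b)\<^sup>2 \<le> 1 - Re (z * w)" and "1 - Re (z * w) \<le> (a + b)\<^sup>2"
proof -
  have a: "a \<ge> 0" "a\<^sup>2 = 1 - Re z"
    using assms(1) abs_Re_le_cmod[of z] unfolding a_def by auto
  have b: "b \<ge> 0" "b\<^sup>2 = 1 - Re w"
    using assms(2) abs_Re_le_cmod[of w] unfolding b_def by auto
  have Im_bound: "\<bar>Im z * Im w\<bar> \<le> a * b * (2 - a * b)"
    using abs_mult_le_of_power2_bounds a(1) b(1) Im_power2_le_in_unit_disk assms
    unfolding a_def b_def by blast
  have Re_mult: "1 - Re (z * w) = a\<^sup>2 + b\<^sup>2 - a\<^sup>2 * b\<^sup>2 + Im z * Im w"
    by (simp add: a(2) b(2) algebra_simps)
  have "(a - b)\<^sup>2 = a\<^sup>2 + b\<^sup>2 - a\<^sup>2 * b\<^sup>2 - a * b * (2 - a * b)"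
    "(a + b)\<^sup>2 = a\<^sup>2 + b\<^sup>2 - a\<^sup>2 * b\<^sup>2 + a * b * (2 - a * b) + 2 * (a * b)\<^sup>2"
    by algebra+
  moreover have "- (Im z * Im w) \<le> a * b * (2 - a * b)" "Im z * Im w \<le> a * b * (2 - a * b)"
    using Im_bound by linarith+
  ultimately show "(a - b)\<^sup>2 \<le> 1 - Re (z * w)" and "1 - Re (z * w) \<le> (a + b)\<^sup>2"
    unfolding Re_mult using zero_le_power2[of "a * b"] by linarith+
qed

lemma sqrt_one_minus_Re_mult_bounds:
  assumes "cmod z \<le> 1" "cmod w \<le> 1"
  shows "\<bar>sqrt (1 - Re z) - sqrt (1 - Re w)\<bar> \<le> sqrt (1 - Re (z * w))"
    and "sqrt (1 - Re (z * w)) \<le> sqrt (1 - Re z) + sqrt (1 - Re w)"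
proof -
  have "Re z \<le> 1" "Re w \<le> 1"
    using assms abs_Re_le_cmod[of z] abs_Re_le_cmod[of w] by linarith+
  then show "\<bar>sqrt (1 - Re z) - sqrt (1 - Re w)\<bar> \<le> sqrt (1 - Re (z * w))"
    and "sqrt (1 - Re (z * w)) \<le> sqrt (1 - Re z) + sqrt (1 - Re w)"
    using real_sqrt_le_mono[OF one_minus_Re_mult_bounds(1)[OF assms]]
      real_sqrt_le_mono[OF one_minus_Re_mult_bounds(2)[OF assms]]
    by simp_all
qed

theorem lemma1:
  fixes \<theta> \<phi> p q :: real
  assumes "\<theta> \<in> {0..2*pi}" and "\<phi> \<in> {0..2*pi}"
    and "p \<in> {0..1}" and "q \<in> {0..1}"
  shows "sqrt (1 - p*q*cos (\<theta> + \<phi>)) \<le> sqrt (1 - p*cos \<theta>) + sqrt (1 - q*cos \<phi>) \<and>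
         sqrt (1 - p*q*cos (\<theta> - \<phi>)) \<ge> sqrt (1 - p*cos \<theta>) - sqrt (1 - q*cos \<phi>)"
proof
  have disk: "cmod (rcis p \<theta>) \<le> 1" "cmod (rcis q \<phi>) \<le> 1" "cmod (rcis q (- \<phi>)) \<le> 1"
    using assms(3,4) by auto
  show "sqrt (1 - p*q*cos (\<theta> + \<phi>)) \<le> sqrt (1 - p*cos \<theta>) + sqrt (1 - q*cos \<phi>)"
    using sqrt_one_minus_Re_mult_bounds(2)[OF disk(1,2)] by (simp add: rcis_mult)
  show "sqrt (1 - p*q*cos (\<theta> - \<phi>)) \<ge> sqrt (1 - p*cos \<theta>) - sqrt (1 - q*cos \<phi>)"
    using sqrt_one_minus_Re_mult_bounds(1)[OF disk(1,3)] by (simp add: rcis_mult)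
qed

end
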